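(* Each of the following random matrices $\Pi\in\mathbb{R}^{m\times n}$ satisfies the RP conditions: (a) Gaussian projection (GP), with i.i.d. entries $\Pi_{ki}\sim N(0,m^{-1})$; (b) countsketch (CS); (c) the subsampled randomized Hadamard transform (SRHT) $\Pi=\sqrt{n/m}\,SHD$.
   Context: RP conditions on $\Pi=(\Pi_{ki})$: (i) $\mathbb{E}[\Pi_{ki}]=0$, $\mathbb{E}[\Pi_{ki}^2]=m^{-1}$ for all $k\in[m]$, $i\in[n]$, and $\max_{k,i}\mathbb{E}[\Pi_{ki}^4]=O(m^{-1})$; (ii) $\mathbb{E}[\Pi_{ki}\Pi_{kj}]=0$ and $\mathbb{E}[\Pi_{ki}^2\Pi_{kj}^2]=m^{-2}$ for all $k$ and $i\neq j$; (iii) $\mathbb{E}[\Pi_{ki}\Pi_{kj}\Pi_{\ell p}\Pi_{\ell q}]=0$ for all $k\neq\ell$, $i\neq j$, $p\neq q$. Countsketch: $\Pi$ has i.i.d. columns, each with exactly one nonzero entry, located in a uniformly random row and equal to $\pm1$ with equal probability. SRHT: $S\in\mathbb{R}^{m\times n}$ is a uniform sampling-with-replacement matrix (its rows are i.i.d., each equal to $\iota_k^T$ for $k$ uniform on $[n]$, $\iota_k$ the $k$-th standard basis vector), $H\in\mathbb{R}^{n\times n}$ is the normalized Walsh–Hadamard matrix (orthogonal, entries $\pm n^{-1/2}$), and $D\in\mathbb{R}^{n\times n}$ is diagonal with i.i.d. Rademacher ($\pm1$ equiprobable) entries, $S$ and $D$ independent. *)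

theory Defs
  imports "HOL-Probability.Probability"
begin

text \<open>Random matrices are represented as functions from a sample space to
  entries: Pi w k i is the (k,i) entry, with 0-based indices k < m, i < n.\<close>

definition RP_conditions ::
  "'w measure \<Rightarrow> nat \<Rightarrow> nat \<Rightarrow> ('w \<Rightarrow> nat \<Rightarrow> nat \<Rightarrow> real) \<Rightarrow> real \<Rightarrow> bool" where
  "RP_conditions M m n P C \<longleftrightarrow>
     (\<forall>k<m. \<forall>i<n.
        integrable M (\<lambda>w. (P w k i) ^ 4) \<and>
        (\<integral>w. P w k i \<partial>M) = 0 \<and>
        (\<integral>w. (P w k i)^2 \<partial>M) = 1 / real m \<and>
        (\<integral>w. (P w k i)^4 \<partial>M) \<le> C / real m) \<and>
     (\<forall>k<m. \<forall>i<n. \<forall>j<n. i \<noteq> j \<longrightarrow>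
        (\<integral>w. P w k i * P w k j \<partial>M) = 0 \<and>
        (\<integral>w. (P w k i)^2 * (P w k j)^2 \<partial>M) = 1 / (real m)^2) \<and>
     (\<forall>k<m. \<forall>l<m. \<forall>i<n. \<forall>j<n. \<forall>p<n. \<forall>q<n.
        k \<noteq> l \<longrightarrow> i \<noteq> j \<longrightarrow> p \<noteq> q \<longrightarrow>
        (\<integral>w. P w k i * P w k j * P w l p * P w l q \<partial>M) = 0)"

definition GP_space :: "nat \<Rightarrow> nat \<Rightarrow> (nat \<times> nat \<Rightarrow> real) measure" where
  "GP_space m n = (\<Pi>\<^sub>M ki\<in>{..<m} \<times> {..<n}. density lborel (normal_density 0 (sqrt (1 / real m))))"

definition GP_matrix :: "(nat \<times> nat \<Rightarrow> real) \<Rightarrow> nat \<Rightarrow> nat \<Rightarrow> real" where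
  "GP_matrix w k i = w (k, i)"

text \<open>Countsketch: for each column i, independently, a uniform pair (row, sign).\<close>
definition CS_space :: "nat \<Rightarrow> nat \<Rightarrow> (nat \<Rightarrow> nat \<times> real) pmf" where
  "CS_space m n = Pi_pmf {..<n} undefined (\<lambda>_. pmf_of_set ({..<m} \<times> {-1, 1}))"

definition CS_matrix :: "(nat \<Rightarrow> nat \<times> real) \<Rightarrow> nat \<Rightarrow> nat \<Rightarrow> real" where
  "CS_matrix w k i = (if fst (w i) = k then snd (w i) else 0)"

text \<open>Unnormalized Sylvester--Walsh--Hadamard sign matrix of size 2^p (entries +-1).\<close>
fun walsh_sign :: "nat \<Rightarrow> nat \<Rightarrow> nat \<Rightarrow> real" where
  "walsh_sign 0 i j = 1"
| "walsh_sign (Suc p) i j =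
     (if 2^p \<le> i \<and> 2^p \<le> j then -1 else 1) * walsh_sign p (i mod 2^p) (j mod 2^p)"

definition hadamard :: "nat \<Rightarrow> nat \<Rightarrow> nat \<Rightarrow> real" where
  "hadamard p i j = walsh_sign p i j / sqrt (2^p)"

text \<open>SRHT with n = 2^p: S given by i.i.d. uniform row indices s k in {..<n} (k < m),
  D given by i.i.d. Rademacher signs d i (i < n), S and D independent.\<close>
definition SRHT_space :: "nat \<Rightarrow> nat \<Rightarrow> ((nat \<Rightarrow> nat) \<times> (nat \<Rightarrow> real)) pmf" where
  "SRHT_space m p = pair_pmf
     (Pi_pmf {..<m} 0 (\<lambda>_. pmf_of_set {..<(2::nat)^p}))
     (Pi_pmf {..<(2::nat)^p} 1 (\<lambda>_. pmf_of_set {-1, 1}))"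

text \<open>Pi = sqrt(n/m) S H D, so Pi_{ki} = sqrt(n/m) * H_{s_k, i} * d_i.\<close>
definition SRHT_matrix :: "nat \<Rightarrow> nat \<Rightarrow> (nat \<Rightarrow> nat) \<times> (nat \<Rightarrow> real) \<Rightarrow> nat \<Rightarrow> nat \<Rightarrow> real" where
  "SRHT_matrix m p w k i =
     sqrt (real (2^p) / real m) * hadamard p (fst w k) i * snd w i"

end

theory Submission
  imports Defs
begin

(* GP: the entries are independent centred Gaussians, so every mixed moment factors into
   moments E x = 0, E x^2 = 1/m and E x^4 = 3/m^2.
   CS: the columns are independent and a column has a single nonzero entry, so a product of
   entries of one column in two different rows vanishes; in one entry the sign is symmetric.
   SRHT: |H| = n^(-1/2) makes every squared entry equal to 1/m, so the even conditions are
   deterministic.  A product in which some sign d_x occurs an odd number of times has mean 0,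
   since flipping d_x preserves the law of D.  The remaining product
   (H_{s_k i} H_{s_k j}) (H_{s_l i} H_{s_l j}) with k ~= l factors over the independent rows
   s_k, s_l, and each factor vanishes because distinct columns of H are orthogonal. *)

lemma expectation_Pi_pmf_prod_subset:
  fixes g :: "'a \<Rightarrow> 'b \<Rightarrow> real"
  assumes "finite A" and "S \<subseteq> A" and "\<And>x. x \<in> S \<Longrightarrow> integrable (measure_pmf (p x)) (g x)"
  shows "measure_pmf.expectation (Pi_pmf A d p) (\<lambda>y. \<Prod>x\<in>S. g x (y x))
       = (\<Prod>x\<in>S. measure_pmf.expectation (p x) (g x))"
proof -
  have component: "map_pmf (\<lambda>y. y x) (Pi_pmf A d p) = p x" if "x \<in> S" for x
    using that assms(2) by (subst Pi_pmf_component[OF assms(1)]) auto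
  have integrable: "integrable (Pi_pmf A d p) (\<lambda>y. g x (y x))" if "x \<in> S" for x
    using assms(3)[OF that] by (simp flip: component[OF that])
  have indep: "prob_space.indep_vars (Pi_pmf A d p) (\<lambda>_. borel) (\<lambda>x y. g x (y x)) S"
    by (intro prob_space.indep_vars_compose2[OF _ prob_space.indep_vars_subset[OF _ indep_vars_Pi_pmf]])
       (use assms in \<open>auto simp: measure_pmf.prob_space_axioms\<close>)
  have "measure_pmf.expectation (Pi_pmf A d p) (\<lambda>y. \<Prod>x\<in>S. g x (y x))
      = (\<Prod>x\<in>S. measure_pmf.expectation (Pi_pmf A d p) (\<lambda>y. g x (y x)))"
    using assms integrable
    by (intro prob_space.indep_vars_lebesgue_integral[OF measure_pmf.prob_space_axioms _ indep])
       (auto intro: finite_subset)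
  also have "\<dots> = (\<Prod>x\<in>S. measure_pmf.expectation (p x) (g x))"
    by (intro prod.cong refl) (simp flip: component)
  finally show ?thesis .
qed

lemma expectation_pmf_eq_const:
  fixes c :: real
  assumes "\<And>x. x \<in> set_pmf M \<Longrightarrow> f x = c"
  shows "measure_pmf.expectation M f = c"
  using assms by (subst integral_cong_AE[where g = "\<lambda>_. c"]) (auto simp: AE_measure_pmf_iff)

lemma
  fixes f :: "'i \<Rightarrow> 'a \<Rightarrow> real"
  assumes "\<And>i. prob_space (M i)" and "finite I" and "S \<subseteq> I"
    and "\<And>i. i \<in> S \<Longrightarrow> integrable (M i) (f i)"
  shows product_integral_prod_subset:
      "(\<integral>x. (\<Prod>i\<in>S. f i (x i)) \<partial>PiM I M) = (\<Prod>i\<in>S. integral\<^sup>L (M i) (f i))"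
    and product_integrable_prod_subset:
      "integrable (PiM I M) (\<lambda>x. \<Prod>i\<in>S. f i (x i))"
proof -
  interpret product_prob_space M I
    using assms(1) by (simp add: product_prob_space_def product_prob_space_axioms_def
        product_sigma_finite_def prob_space_imp_sigma_finite)
  define g where "g i = (if i \<in> S then f i else (\<lambda>_. 1))" for i
  have extend: "(\<lambda>x. \<Prod>i\<in>S. f i (x i)) = (\<lambda>x. \<Prod>i\<in>I. g i (x i))"
    using assms by (intro ext prod.mono_neutral_cong_left) (auto simp: g_def)
  have integrable_g: "\<And>i. i \<in> I \<Longrightarrow> integrable (M i) (g i)"
    using assms by (auto simp: g_def)
  show "(\<integral>x. (\<Prod>i\<in>S. f i (x i)) \<partial>PiM I M) = (\<Prod>i\<in>S. integral\<^sup>L (M i) (f i))"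
  proof -
    have "(\<integral>x. (\<Prod>i\<in>I. g i (x i)) \<partial>PiM I M) = (\<Prod>i\<in>I. integral\<^sup>L (M i) (g i))"
      by (rule product_integral_prod[OF \<open>finite I\<close> integrable_g])
    also have "\<dots> = (\<Prod>i\<in>S. integral\<^sup>L (M i) (f i))"
      using assms by (intro prod.mono_neutral_cong_right) (auto simp: g_def M.prob_space)
    finally show ?thesis unfolding extend .
  qed
  show "integrable (PiM I M) (\<lambda>x. \<Prod>i\<in>S. f i (x i))"
    unfolding extend by (rule product_integrable_prod[OF \<open>finite I\<close> integrable_g])
qed

section \<open>Gaussian projection\<close>

context
  fixes \<sigma> :: real
  assumes \<sigma>_pos: "0 < \<sigma>"
begin

lemma integrable_normal_power: "integrable (density lborel (normal_density 0 \<sigma>)) (\<lambda>x. x ^ k)"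
  using integrable_normal_moment[OF \<sigma>_pos, of 0 k] by (subst integrable_density) auto

lemma integral_normal_id: "(\<integral>x. x \<partial>density lborel (normal_density 0 \<sigma>)) = 0"
  using integral_normal_moment_odd[OF \<sigma>_pos, of 0 0] by (simp add: integral_density)

lemma integral_normal_power2: "(\<integral>x. x ^ 2 \<partial>density lborel (normal_density 0 \<sigma>)) = \<sigma> ^ 2"
  using integral_normal_moment_even[OF \<sigma>_pos, of 0 1] by (simp add: integral_density)

lemma integral_normal_power4: "(\<integral>x. x ^ 4 \<partial>density lborel (normal_density 0 \<sigma>)) = 3 * \<sigma> ^ 4"
  using integral_normal_moment_even[OF \<sigma>_pos, of 0 2]
  by (simp add: integral_density fact_numeral eval_nat_numeral)

end

lemma RP_conditions_iid_entries:
  assumes "prob_space N" and integrable: "\<And>r. r \<le> 4 \<Longrightarrow> integrable N (\<lambda>x. x ^ r)"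
    and mean: "(\<integral>x. x \<partial>N) = 0" and second: "(\<integral>x. x ^ 2 \<partial>N) = 1 / real m"
    and fourth: "(\<integral>x. x ^ 4 \<partial>N) \<le> C / real m"
  shows "RP_conditions (\<Pi>\<^sub>M ki\<in>{..<m} \<times> {..<n}. N) m n GP_matrix C"
proof -
  let ?I = "{..<m} \<times> {..<n}"
  have integrable_id: "integrable N (\<lambda>x. x)"
    using integrable[of 1] by simp
  note product =
    product_integral_prod_subset[where M = "\<lambda>_. N" and I = ?I, OF \<open>prob_space N\<close>, simplified]
  show ?thesis
    unfolding RP_conditions_def GP_matrix_def
  proof (intro conjI allI impI)
    fix k i assume "k < m" "i < n"
    then have single: "{(k, i)} \<subseteq> ?I" by simp
    show "integrable (\<Pi>\<^sub>M ki\<in>?I. N) (\<lambda>w. w (k, i) ^ 4)"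
      using product_integrable_prod_subset[OF \<open>prob_space N\<close> _ single, of "\<lambda>_ x. x ^ 4"] integrable
      by simp
    show "(\<integral>w. w (k, i) \<partial>(\<Pi>\<^sub>M ki\<in>?I. N)) = 0"
      using product[OF single, of "\<lambda>_ x. x"] integrable_id mean by simp
    show "(\<integral>w. w (k, i) ^ 2 \<partial>(\<Pi>\<^sub>M ki\<in>?I. N)) = 1 / real m"
      using product[OF single, of "\<lambda>_ x. x ^ 2"] integrable second by simp
    show "(\<integral>w. w (k, i) ^ 4 \<partial>(\<Pi>\<^sub>M ki\<in>?I. N)) \<le> C / real m"
      using product[OF single, of "\<lambda>_ x. x ^ 4"] integrable fourth by simp
  next
    fix k i j assume "k < m" "i < n" "j < n" "i \<noteq> j"
    then have pair: "{(k, i), (k, j)} \<subseteq> ?I" by simp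
    show "(\<integral>w. w (k, i) * w (k, j) \<partial>(\<Pi>\<^sub>M ki\<in>?I. N)) = 0"
      using product[OF pair, of "\<lambda>_ x. x"] integrable_id mean \<open>i \<noteq> j\<close> by simp
    show "(\<integral>w. w (k, i) ^ 2 * w (k, j) ^ 2 \<partial>(\<Pi>\<^sub>M ki\<in>?I. N)) = 1 / (real m)^2"
      using product[OF pair, of "\<lambda>_ x. x ^ 2"] integrable second \<open>i \<noteq> j\<close>
      by (simp add: power2_eq_square[of "real m"])
  next
    fix k l i j p q assume "k < m" "l < m" "i < n" "j < n" "p < n" "q < n"
      and "k \<noteq> l" "i \<noteq> j" "p \<noteq> q"
    then have quadruple: "{(k, i), (k, j), (l, p), (l, q)} \<subseteq> ?I" by simp
    show "(\<integral>w. w (k, i) * w (k, j) * w (l, p) * w (l, q) \<partial>(\<Pi>\<^sub>M ki\<in>?I. N)) = 0"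
      using product[OF quadruple, of "\<lambda>_ x. x"] integrable_id mean
        \<open>k \<noteq> l\<close> \<open>i \<noteq> j\<close> \<open>p \<noteq> q\<close>
      by (simp add: mult.assoc)
  qed
qed

lemma GP_RP_conditions:
  assumes "0 < m"
  shows "RP_conditions (GP_space m n) m n GP_matrix 3"
proof -
  define \<sigma> where "\<sigma> = sqrt (1 / real m)"
  have "0 < \<sigma>" and \<sigma>_sq: "\<sigma> ^ 2 = 1 / real m"
    using assms by (simp_all add: \<sigma>_def)
  have "3 * \<sigma> ^ 4 = 3 * (\<sigma> ^ 2) ^ 2"
    by (simp flip: power_mult)
  also have "\<dots> = 3 / real m * (1 / real m)"
    unfolding \<sigma>_sq by (simp add: power2_eq_square)
  also have "\<dots> \<le> 3 / real m"
    using assms by (simp add: field_simps)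
  finally have "3 * \<sigma> ^ 4 \<le> 3 / real m" .
  then show ?thesis
    unfolding GP_space_def \<sigma>_def[symmetric]
    using \<open>0 < \<sigma>\<close> \<sigma>_sq
    by (intro RP_conditions_iid_entries prob_space_normal_density integrable_normal_power)
       (simp_all add: integral_normal_id integral_normal_power2 integral_normal_power4)
qed

section \<open>Countsketch\<close>

definition sketch_entry :: "nat \<Rightarrow> nat \<times> real \<Rightarrow> real" where
  "sketch_entry k v = (if fst v = k then snd v else 0)"

lemma CS_matrix_eq_sketch_entry: "CS_matrix w k i = sketch_entry k (w i)"
  by (simp add: CS_matrix_def sketch_entry_def)

lemma expectation_CS_columns:
  fixes g :: "nat \<Rightarrow> nat \<times> real \<Rightarrow> real"
  assumes "0 < m" and "S \<subseteq> {..<n}"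
  shows "measure_pmf.expectation (CS_space m n) (\<lambda>w. \<Prod>x\<in>S. g x (w x))
       = (\<Prod>x\<in>S. measure_pmf.expectation (pmf_of_set ({..<m} \<times> {-1, 1})) (g x))"
  unfolding CS_space_def using assms
  by (intro expectation_Pi_pmf_prod_subset integrable_measure_pmf_finite)
     (auto simp: set_pmf_of_set lessThan_empty_iff)

lemma expectation_sketch_entry_power:
  assumes "k < m" and "0 < r"
  shows "measure_pmf.expectation (pmf_of_set ({..<m} \<times> {-1, 1})) (\<lambda>v. sketch_entry k v ^ r)
       = ((-1) ^ r + 1) / (2 * real m)"
proof -
  have "sketch_entry k v ^ r = (if fst v = k then snd v ^ r else 0)" for v
    using \<open>0 < r\<close> by (simp add: sketch_entry_def)
  then have "(\<Sum>v\<in>{..<m} \<times> {-1, 1}. sketch_entry k v ^ r)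
      = (\<Sum>a<m. \<Sum>b\<in>{-1, 1::real}. if a = k then b ^ r else 0)"
    by (subst sum.cartesian_product) (simp add: split_beta)
  also have "\<dots> = (-1) ^ r + 1"
    using \<open>k < m\<close> by (simp add: if_distrib[of "\<lambda>x. x + _"] sum.delta cong: if_cong)
  finally show ?thesis
    using assms by (subst integral_pmf_of_set) (auto simp: card_cartesian_product)
qed

lemma expectation_sketch_entry:
  assumes "k < m"
  shows "measure_pmf.expectation (pmf_of_set ({..<m} \<times> {-1, 1})) (sketch_entry k) = 0"
  using expectation_sketch_entry_power[OF assms, of 1] by simp

lemma expectation_CS_two_rows:
  assumes "0 < m" "k < m" "k \<noteq> l" "i < n" "j < n" "p < n" "q < n" "i \<noteq> j" "p \<noteq> q"
  shows "measure_pmf.expectation (CS_space m n)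
           (\<lambda>w. sketch_entry k (w i) * sketch_entry k (w j) * sketch_entry l (w p) * sketch_entry l (w q))
       = 0"
proof (cases "{i, j} \<inter> {p, q} = {}")
  case False
  \<comment> \<open>a column shared by rows k and l has a zero entry in one of them\<close>
  then have "sketch_entry k (w i) * sketch_entry k (w j) * sketch_entry l (w p) * sketch_entry l (w q) = 0"
    for w using \<open>k \<noteq> l\<close> by (auto simp: sketch_entry_def)
  then show ?thesis
    by (simp only: integral_zero)
next
  case True
  define g where "g x = sketch_entry (if x \<in> {i, j} then k else l)" for x
  have "sketch_entry k (w i) * sketch_entry k (w j) * sketch_entry l (w p) * sketch_entry l (w q)
      = (\<Prod>x\<in>{i, j, p, q}. g x (w x))" for w
    using True \<open>i \<noteq> j\<close> \<open>p \<noteq> q\<close> by (simp add: g_def mult.assoc)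
  then show ?thesis
    using expectation_CS_columns[OF \<open>0 < m\<close>, where S = "{i, j, p, q}" and n = n and g = g]
      expectation_sketch_entry[OF \<open>k < m\<close>] True assms(4-7)
    by (simp add: g_def)
qed

lemma CS_RP_conditions:
  assumes "0 < m"
  shows "RP_conditions (measure_pmf (CS_space m n)) m n CS_matrix 1"
proof -
  let ?E = "measure_pmf.expectation (CS_space m n)"
  note columns = expectation_CS_columns[OF assms, where n = n]
  show ?thesis
    unfolding RP_conditions_def CS_matrix_eq_sketch_entry
  proof (intro conjI allI impI)
    fix k i assume "k < m" "i < n"
    show "integrable (CS_space m n) (\<lambda>w. sketch_entry k (w i) ^ 4)"
      using assms by (auto simp: CS_space_def set_Pi_pmf set_pmf_of_set lessThan_empty_iff
          intro!: integrable_measure_pmf_finite finite_PiE_dflt)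
    show "?E (\<lambda>w. sketch_entry k (w i)) = 0"
      using columns[where S = "{i}" and g = "\<lambda>_. sketch_entry k"] expectation_sketch_entry
        \<open>k < m\<close> \<open>i < n\<close>
      by simp
    show "?E (\<lambda>w. sketch_entry k (w i) ^ 2) = 1 / real m"
      using columns[where S = "{i}" and g = "\<lambda>_ v. sketch_entry k v ^ 2"]
        expectation_sketch_entry_power[of k m 2] \<open>k < m\<close> \<open>i < n\<close>
      by simp
    show "?E (\<lambda>w. sketch_entry k (w i) ^ 4) \<le> 1 / real m"
      using columns[where S = "{i}" and g = "\<lambda>_ v. sketch_entry k v ^ 4"]
        expectation_sketch_entry_power[of k m 4] \<open>k < m\<close> \<open>i < n\<close>
      by simp
  next
    fix k i j assume "k < m" "i < n" "j < n" "i \<noteq> j"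
    then show "?E (\<lambda>w. sketch_entry k (w i) * sketch_entry k (w j)) = 0"
      using columns[where S = "{i, j}" and g = "\<lambda>_. sketch_entry k"] expectation_sketch_entry
      by simp
    show "?E (\<lambda>w. sketch_entry k (w i) ^ 2 * sketch_entry k (w j) ^ 2) = 1 / (real m)^2"
      using columns[where S = "{i, j}" and g = "\<lambda>_ v. sketch_entry k v ^ 2"]
        expectation_sketch_entry_power[of k m 2]
        \<open>k < m\<close> \<open>i < n\<close> \<open>j < n\<close> \<open>i \<noteq> j\<close>
      by (simp add: power2_eq_square[of "real m"])
  next
    fix k l i j p q assume "k < m" "l < m" "i < n" "j < n" "p < n" "q < n"
      and "k \<noteq> l" "i \<noteq> j" "p \<noteq> q"
    then show "?E (\<lambda>w. sketch_entry k (w i) * sketch_entry k (w j)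
        * sketch_entry l (w p) * sketch_entry l (w q)) = 0"
      using expectation_CS_two_rows[OF assms] by simp
  qed
qed

section \<open>Walsh--Hadamard matrices and Rademacher signs\<close>

lemma sum_lessThan_add:
  fixes f :: "nat \<Rightarrow> 'a::comm_monoid_add"
  shows "(\<Sum>s<a + b. f s) = (\<Sum>s<a. f s) + (\<Sum>s<b. f (a + s))"
  by (induction b) (simp_all add: add.assoc)

lemma walsh_sign_square [simp]: "(walsh_sign p i j)^2 = 1"
  by (induction p arbitrary: i j) (simp_all add: power_mult_distrib)

lemma eq_iff_mod_eq_and_le_eq:
  fixes i j N :: nat
  assumes "i < 2 * N" "j < 2 * N"
  shows "i = j \<longleftrightarrow> i mod N = j mod N \<and> (N \<le> i \<longleftrightarrow> N \<le> j)"
  using assms by (auto simp: le_mod_geq)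

lemma walsh_sign_orthogonal:
  assumes "i < 2^p" "j < 2^p"
  shows "(\<Sum>s<2^p. walsh_sign p s i * walsh_sign p s j) = (if i = j then 2^p else 0)"
  using assms
proof (induction p arbitrary: i j)
  case 0
  then show ?case by simp
next
  case (Suc p)
  define N :: nat where "N = 2^p"
  define e where "e i = (if N \<le> i then -1 else (1::real))" for i
  have "i < 2 * N" "j < 2 * N"
    using Suc.prems by (simp_all add: N_def)
  have low: "walsh_sign (Suc p) s i = walsh_sign p s (i mod N)" if "s < N" for s i
    using that by (simp add: N_def)
  have high: "walsh_sign (Suc p) (N + s) i = e i * walsh_sign p s (i mod N)" if "s < N" for s i
    using that by (simp add: N_def e_def)
  have "(2::nat)^Suc p = N + N"
    by (simp add: N_def)
  then have "(\<Sum>s<2^Suc p. walsh_sign (Suc p) s i * walsh_sign (Suc p) s j)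
      = (\<Sum>s<N. walsh_sign (Suc p) s i * walsh_sign (Suc p) s j)
        + (\<Sum>s<N. walsh_sign (Suc p) (N + s) i * walsh_sign (Suc p) (N + s) j)"
    by (simp only: sum_lessThan_add)
  also have "\<dots> = (1 + e i * e j) * (\<Sum>s<N. walsh_sign p s (i mod N) * walsh_sign p s (j mod N))"
    by (simp add: low high sum_distrib_left sum.distrib ring_distribs mult_ac del: walsh_sign.simps)
  also have "\<dots> = (1 + e i * e j) * (if i mod N = j mod N then real N else 0)"
    using Suc.IH[of "i mod N" "j mod N"] by (simp add: N_def)
  also have "\<dots> = (if i = j then 2^Suc p else 0)"
    using eq_iff_mod_eq_and_le_eq[OF \<open>i < 2 * N\<close> \<open>j < 2 * N\<close>] by (auto simp: e_def N_def)
  finally show ?case .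
qed

lemma hadamard_square: "(hadamard p s i)^2 = 1 / 2^p"
  by (simp add: hadamard_def power_divide)

lemma expectation_hadamard_orthogonal:
  assumes "i < 2^p" "j < 2^p" "i \<noteq> j"
  shows "measure_pmf.expectation (pmf_of_set {..<2^p}) (\<lambda>s. hadamard p s i * hadamard p s j) = 0"
proof -
  have "(\<Sum>s<2^p. hadamard p s i * hadamard p s j)
      = (\<Sum>s<2^p. walsh_sign p s i * walsh_sign p s j) / 2^p"
    by (simp add: hadamard_def sum_divide_distrib)
  also have "\<dots> = 0"
    using walsh_sign_orthogonal[OF assms(1,2)] assms(3) by simp
  finally show ?thesis
    by (subst integral_pmf_of_set) (auto simp: lessThan_empty_iff)
qed

lemma map_pmf_Rademacher_flip:
  assumes "finite A" "x \<in> A"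
  shows "map_pmf (\<lambda>d. d(x := - d x)) (Pi_pmf A 1 (\<lambda>_. pmf_of_set {-1, 1::real}))
       = Pi_pmf A 1 (\<lambda>_. pmf_of_set {-1, 1::real})"
    (is "map_pmf ?flip ?D = ?D")
proof (rule pmf_eqI)
  fix d
  have involution: "?flip (?flip d) = d" for d
    by simp
  then have "inj ?flip"
    by (rule inj_on_inverseI[where g = ?flip])
  have "pmf (map_pmf ?flip ?D) d = pmf (map_pmf ?flip ?D) (?flip (?flip d))"
    by (simp only: involution)
  also have "\<dots> = pmf ?D (?flip d)"
    by (rule pmf_map_inj'[OF \<open>inj ?flip\<close>])
  also have "\<dots> = pmf ?D d"
    using assms by (simp add: pmf_Pi pmf_of_set indicator_def)
      (auto intro!: prod.cong split: if_splits)
  finally show "pmf (map_pmf ?flip ?D) d = pmf ?D d" .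
qed

lemma expectation_odd_in_Rademacher_sign:
  fixes F :: "'b \<times> ('a \<Rightarrow> real) \<Rightarrow> real"
  assumes "finite A" "x \<in> A" and odd: "\<And>s d. F (s, d(x := - d x)) = - F (s, d)"
  shows "measure_pmf.expectation (pair_pmf M (Pi_pmf A 1 (\<lambda>_. pmf_of_set {-1, 1}))) F = 0"
proof -
  let ?D = "Pi_pmf A 1 (\<lambda>_. pmf_of_set {-1, 1::real})" and ?flip = "\<lambda>d. d(x := - d x)"
  have invariant: "map_pmf (apsnd ?flip) (pair_pmf M ?D) = pair_pmf M ?D"
    using pair_map_pmf2[of M ?flip ?D] map_pmf_Rademacher_flip[OF assms(1,2)] by simp
  have "measure_pmf.expectation (pair_pmf M ?D) F
      = measure_pmf.expectation (pair_pmf M ?D) (\<lambda>w. F (apsnd ?flip w))"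
    by (subst (1) invariant[symmetric]) (simp only: integral_map_pmf)
  also have "\<dots> = - measure_pmf.expectation (pair_pmf M ?D) F"
  proof -
    have "F (apsnd ?flip w) = - F w" for w
      using odd[of "fst w" "snd w"] by (simp add: apsnd_def map_prod_def case_prod_unfold)
    then show ?thesis
      by simp
  qed
  finally show ?thesis
    by simp
qed

section \<open>Subsampled randomized Hadamard transform\<close>

lemma SRHT_sign_square:
  assumes "w \<in> set_pmf (SRHT_space m p)"
  shows "(snd w i)^2 = 1"
proof -
  have "snd w \<in> set_pmf (Pi_pmf {..<2^p} 1 (\<lambda>_. pmf_of_set {-1, 1::real}))"
    using assms by (auto simp: SRHT_space_def)
  then have "snd w i \<in> {-1, 1}"
    by (auto simp: set_Pi_pmf PiE_dflt_def)
  then show ?thesis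
    by auto
qed

lemma SRHT_matrix_square:
  assumes "0 < m" and "w \<in> set_pmf (SRHT_space m p)"
  shows "(SRHT_matrix m p w k i)^2 = 1 / real m"
  using assms SRHT_sign_square[OF assms(2)]
  by (simp add: SRHT_matrix_def power_mult_distrib hadamard_square)

lemma expectation_SRHT_odd_in_sign:
  fixes F :: "(nat \<Rightarrow> nat) \<times> (nat \<Rightarrow> real) \<Rightarrow> real"
  assumes "x < 2^p" and "\<And>s d. F (s, d(x := - d x)) = - F (s, d)"
  shows "measure_pmf.expectation (SRHT_space m p) F = 0"
  unfolding SRHT_space_def using assms by (intro expectation_odd_in_Rademacher_sign) auto

lemma expectation_SRHT_two_rows:
  assumes "k < m" "l < m" "k \<noteq> l" "i < 2^p" "j < 2^p" "i \<noteq> j"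
  shows "measure_pmf.expectation (SRHT_space m p)
           (\<lambda>w. SRHT_matrix m p w k i * SRHT_matrix m p w k j * SRHT_matrix m p w l i * SRHT_matrix m p w l j)
       = 0"
proof -
  define S where "S = Pi_pmf {..<m} 0 (\<lambda>_. pmf_of_set {..<(2::nat)^p})"
  define F where "F s = hadamard p s i * hadamard p s j" for s
  define c where "c = (real (2^p) / real m)^2"
  let ?P = "SRHT_matrix m p"
  have "?P w k i * ?P w k j * ?P w l i * ?P w l j = c * (F (fst w k) * F (fst w l))"
    if "w \<in> set_pmf (SRHT_space m p)" for w
  proof -
    have "?P w k i * ?P w k j * ?P w l i * ?P w l j
        = c * (F (fst w k) * F (fst w l)) * ((snd w i)^2 * (snd w j)^2)"
      by (simp add: SRHT_matrix_def c_def F_def power2_eq_square mult_ac)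
    then show ?thesis
      using SRHT_sign_square[OF that] by simp
  qed
  then have "measure_pmf.expectation (SRHT_space m p) (\<lambda>w. ?P w k i * ?P w k j * ?P w l i * ?P w l j)
      = measure_pmf.expectation (SRHT_space m p) (\<lambda>w. c * (F (fst w k) * F (fst w l)))"
    by (intro integral_cong_AE) (auto simp: AE_measure_pmf_iff)
  also have "\<dots> = c * measure_pmf.expectation (map_pmf fst (SRHT_space m p)) (\<lambda>s. F (s k) * F (s l))"
    by simp
  also have "map_pmf fst (SRHT_space m p) = S"
    by (simp add: SRHT_space_def S_def map_fst_pair_pmf)
  also have "measure_pmf.expectation S (\<lambda>s. F (s k) * F (s l))
      = (\<Prod>y\<in>{k, l}. measure_pmf.expectation (pmf_of_set {..<2^p}) F)"
    using expectation_Pi_pmf_prod_subset[of "{..<m}" "{k, l}" "\<lambda>_. pmf_of_set {..<2^p}" "\<lambda>_. F" 0]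
      assms(1-3)
    by (simp add: S_def integrable_measure_pmf_finite lessThan_empty_iff)
  also have "measure_pmf.expectation (pmf_of_set {..<2^p}) F = 0"
    unfolding F_def using assms(4-6) by (rule expectation_hadamard_orthogonal)
  finally show ?thesis
    using \<open>k \<noteq> l\<close> by simp
qed

lemma SRHT_RP_conditions:
  assumes "0 < m"
  shows "RP_conditions (measure_pmf (SRHT_space m p)) m (2^p) (SRHT_matrix m p) 1"
proof -
  let ?E = "measure_pmf.expectation (SRHT_space m p)" and ?P = "SRHT_matrix m p"
  have square: "?P w k i ^ 2 = 1 / real m" if "w \<in> set_pmf (SRHT_space m p)" for w k i
    using SRHT_matrix_square[OF assms that] .
  show ?thesis
    unfolding RP_conditions_def
  proof (intro conjI allI impI)
    fix k i :: nat assume "k < m" "i < 2^p"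
    show "integrable (SRHT_space m p) (\<lambda>w. ?P w k i ^ 4)"
      by (auto simp: SRHT_space_def set_Pi_pmf lessThan_empty_iff
          intro!: integrable_measure_pmf_finite finite_PiE_dflt)
    show "?E (\<lambda>w. ?P w k i) = 0"
      using \<open>i < 2^p\<close> by (intro expectation_SRHT_odd_in_sign) (auto simp: SRHT_matrix_def)
    show "?E (\<lambda>w. ?P w k i ^ 2) = 1 / real m"
      by (intro expectation_pmf_eq_const square)
    have fourth_power: "?P w k i ^ 4 = (?P w k i ^ 2) ^ 2" for w
      by (simp flip: power_mult)
    have "?E (\<lambda>w. ?P w k i ^ 4) = (1 / real m) ^ 2"
      by (intro expectation_pmf_eq_const) (simp only: fourth_power square)
    also have "\<dots> \<le> 1 / real m"
      using assms by (simp add: power2_eq_square field_simps)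
    finally show "?E (\<lambda>w. ?P w k i ^ 4) \<le> 1 / real m" .
  next
    fix k i j :: nat assume "k < m" "i < 2^p" "j < 2^p" "i \<noteq> j"
    show "?E (\<lambda>w. ?P w k i * ?P w k j) = 0"
      using \<open>i < 2^p\<close> \<open>i \<noteq> j\<close> by (intro expectation_SRHT_odd_in_sign) (auto simp: SRHT_matrix_def)
    show "?E (\<lambda>w. ?P w k i ^ 2 * ?P w k j ^ 2) = 1 / (real m)^2"
      by (intro expectation_pmf_eq_const) (simp add: square power2_eq_square[of "real m"])
  next
    fix k l i j a b :: nat assume "k < m" "l < m" "i < 2^p" "j < 2^p" "a < 2^p" "b < 2^p"
      and "k \<noteq> l" "i \<noteq> j" "a \<noteq> b"
    show "?E (\<lambda>w. ?P w k i * ?P w k j * ?P w l a * ?P w l b) = 0"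
    proof (cases "{a, b} = {i, j}")
      case False
      then obtain x where "x \<in> {i, j}" "x \<notin> {a, b}"
        using \<open>a \<noteq> b\<close> \<open>i \<noteq> j\<close> by blast
      then show ?thesis
        using \<open>i < 2^p\<close> \<open>j < 2^p\<close> \<open>i \<noteq> j\<close>
        by (intro expectation_SRHT_odd_in_sign[of x]) (auto simp: SRHT_matrix_def)
    next
      case True
      then have "(a, b) = (i, j) \<or> (a, b) = (j, i)"
        using \<open>i \<noteq> j\<close> by (metis doubleton_eq_iff)
      then show ?thesis
        using expectation_SRHT_two_rows[OF \<open>k < m\<close> \<open>l < m\<close> \<open>k \<noteq> l\<close>
            \<open>i < 2^p\<close> \<open>j < 2^p\<close> \<open>i \<noteq> j\<close>]
        by (auto simp: mult_ac)
    qed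
  qed
qed

theorem lemmaA1:
  shows "(\<exists>C. \<forall>m n. 0 < m \<longrightarrow> 0 < n \<longrightarrow>
            RP_conditions (GP_space m n) m n GP_matrix C)
       \<and> (\<exists>C. \<forall>m n. 0 < m \<longrightarrow> 0 < n \<longrightarrow>
            RP_conditions (measure_pmf (CS_space m n)) m n CS_matrix C)
       \<and> (\<exists>C. \<forall>m p. 0 < m \<longrightarrow>
            RP_conditions (measure_pmf (SRHT_space m p)) m (2^p) (SRHT_matrix m p) C)"
  using GP_RP_conditions CS_RP_conditions SRHT_RP_conditions by blast

end
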